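(* For every positive integer $n$, the lattice $\widetilde\Pi(D_n)$ does not contain a sublattice isomorphic to the diamond lattice $M_3$.
   Context: For a positive integer $n$, $D_n=\langle r,s\mid r^n=e,\ s^2=e,\ srs^{-1}=r^{-1}\rangle$ is the dihedral group of order $2n$. For a finite group $G$ and a subgroup $H\le G$, let $\pi_e(H)=\{o(x)\mid x\in H\}$. Let $\mathcal{L}(G)$ be the set of subgroups of $G$; define $H_1\equiv H_2$ iff $\pi_e(H_1)=\pi_e(H_2)$, with class $[H]$. The poset $\widetilde\Pi(G)$ is $\mathcal{L}(G)/\!\equiv$ ordered by $[H_1]\lesssim[H_2]$ iff $\pi_e(H_1)\subseteq\pi_e(H_2)$; for $G=D_n$ it is a lattice. $M_3$ is the five-element lattice consisting of a bottom, a top, and three pairwise incomparable elements between them. *)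

theory Defs
  imports "HOL-Algebra.Multiplicative_Group"
begin

text \<open>Concrete model of the dihedral group D_n of order 2n: the pair (k, b) stands for
  r^k s^b with 0 <= k < n.  Since s r^j = r^(-j) s, we get
  (r^a s^u)(r^b s^v) = r^(a + b) s^v if u = 0, and r^(a - b) s^(not v) if u = 1.\<close>

definition dihedral :: "nat \<Rightarrow> (nat \<times> bool) monoid" where
  "dihedral n = \<lparr> carrier = {0..<n} \<times> (UNIV :: bool set),
      monoid.mult = (\<lambda>(a, u) (b, v).
         (if u then (a + n - b) mod n else (a + b) mod n, u \<noteq> v)),
      one = (0, False) \<rparr>"

definition pi_e :: "('a, 'b) monoid_scheme \<Rightarrow> 'a set \<Rightarrow> nat set" where
  "pi_e G H = (group.ord G) ` H"

text \<open>Carrier of the poset Pi~(G): subgroup classes modulo equality of pi_e, each class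
  represented by its common value pi_e(H); ordered by set inclusion.\<close>
definition pi_poset :: "('a, 'b) monoid_scheme \<Rightarrow> nat set set" where
  "pi_poset G = {pi_e G H | H. subgroup H G}"

definition is_meet :: "'c set set \<Rightarrow> 'c set \<Rightarrow> 'c set \<Rightarrow> 'c set \<Rightarrow> bool" where
  "is_meet P a b m \<longleftrightarrow> m \<in> P \<and> m \<subseteq> a \<and> m \<subseteq> b \<and>
     (\<forall>c\<in>P. c \<subseteq> a \<and> c \<subseteq> b \<longrightarrow> c \<subseteq> m)"

definition is_join :: "'c set set \<Rightarrow> 'c set \<Rightarrow> 'c set \<Rightarrow> 'c set \<Rightarrow> bool" where
  "is_join P a b j \<longleftrightarrow> j \<in> P \<and> a \<subseteq> j \<and> b \<subseteq> j \<and>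
     (\<forall>c\<in>P. a \<subseteq> c \<and> b \<subseteq> c \<longrightarrow> j \<subseteq> c)"

definition has_M3_sublattice :: "'c set set \<Rightarrow> bool" where
  "has_M3_sublattice P \<longleftrightarrow> (\<exists>bot top x y z.
     bot \<in> P \<and> top \<in> P \<and> x \<in> P \<and> y \<in> P \<and> z \<in> P \<and>
     distinct [bot, top, x, y, z] \<and>
     is_meet P x y bot \<and> is_meet P x z bot \<and> is_meet P y z bot \<and>
     is_join P x y top \<and> is_join P x z top \<and> is_join P y z top)"

end

theory Submission
  imports Defs "HOL-Computational_Algebra.Primes"
begin

text \<open>A subgroup H of D_n meets the rotation subgroup, cyclic of order n, in the subgroup
  generated by r^c for some c dividing n, and all reflections have order 2.  Hence
  pi_e(H) = Div(n/c) \<union> S with S \<subseteq> {2}, where Div(m) is the set of divisors of m, and every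
  such set occurs.  In this family meets are intersections.  It is not distributive (for
  n = 12, Div 6 \<and> (Div 4 \<or> Div 3) = Div 6, while (Div 6 \<and> Div 4) \<or> (Div 6 \<and> Div 3) = {1, 2, 3}),
  but it has the weaker property that x \<and> z \<le> y, y \<and> z \<le> x and z \<le> x \<or> y imply
  z \<le> x \<and> y, which M_3 violates.\<close>

lemma is_meet_eq_Int:
  assumes "\<And>a b. a \<in> P \<Longrightarrow> b \<in> P \<Longrightarrow> a \<inter> b \<in> P"
    and "a \<in> P" "b \<in> P" "is_meet P a b m"
  shows "m = a \<inter> b"
  using assms unfolding is_meet_def by blast

lemma no_M3_sublattice_if_Int_closed:
  assumes Int_closed: "\<And>a b. a \<in> P \<Longrightarrow> b \<in> P \<Longrightarrow> a \<inter> b \<in> P"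
    and excluded: "\<And>x y z j. x \<in> P \<Longrightarrow> y \<in> P \<Longrightarrow> z \<in> P \<Longrightarrow> is_join P x y j \<Longrightarrow>
      z \<subseteq> j \<Longrightarrow> x \<inter> z \<subseteq> y \<Longrightarrow> y \<inter> z \<subseteq> x \<Longrightarrow> z \<subseteq> x \<inter> y"
  shows "\<not> has_M3_sublattice P"
proof
  assume "has_M3_sublattice P"
  then obtain bot top x y z where P: "x \<in> P" "y \<in> P" "z \<in> P"
    and distinct: "distinct [bot, top, x, y, z]"
    and meets: "is_meet P x y bot" "is_meet P x z bot" "is_meet P y z bot"
    and joins: "is_join P x y top" "is_join P x z top"
    unfolding has_M3_sublattice_def by blast
  from distinct have "z \<noteq> bot" by auto
  moreover have "bot = x \<inter> y" "bot = x \<inter> z" "bot = y \<inter> z"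
    using is_meet_eq_Int[OF Int_closed] P meets by blast+
  moreover have "z \<subseteq> top"
    using joins(2) unfolding is_join_def by blast
  ultimately show False
    using excluded[OF P joins(1)] by blast
qed

definition divisor_sets :: "nat \<Rightarrow> nat \<Rightarrow> nat set set" where
  "divisor_sets p n = {{d. d dvd m} \<union> S | m S. m dvd n \<and> S \<subseteq> {p}}"

lemma divisor_setsI: "m dvd n \<Longrightarrow> S \<subseteq> {p} \<Longrightarrow> {d. d dvd m} \<union> S \<in> divisor_sets p n"
  unfolding divisor_sets_def by blast

lemma divisor_setsE:
  assumes "x \<in> divisor_sets p n"
  obtains m S where "x = {d. d dvd m} \<union> S" "m dvd n" "S \<subseteq> {p}"
  using assms unfolding divisor_sets_def by blast

lemma Int_divisor_sets:
  assumes "x \<in> divisor_sets p n" "y \<in> divisor_sets p n"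
  shows "x \<inter> y \<in> divisor_sets p n"
proof -
  obtain a S where x: "x = {d. d dvd a} \<union> S" "a dvd n" "S \<subseteq> {p}"
    using assms(1) by (rule divisor_setsE)
  obtain b T where y: "y = {d. d dvd b} \<union> T" "b dvd n" "T \<subseteq> {p}"
    using assms(2) by (rule divisor_setsE)
  have "x \<inter> y = {d. d dvd gcd a b} \<union> (x \<inter> y \<inter> {p})"
    using x y by auto
  moreover have "gcd a b dvd n"
    using x(2) by (meson dvd_trans gcd_dvd1)
  ultimately show ?thesis
    by (metis divisor_setsI inf_le2)
qed

lemma prime_dvd_lcm_nat_iff:
  fixes p :: nat
  assumes "prime p"
  shows "p dvd lcm a b \<longleftrightarrow> p dvd a \<or> p dvd b"
proof
  assume "p dvd lcm a b"
  moreover have "lcm a b dvd a * b"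
    by (simp add: lcm_least)
  ultimately show "p dvd a \<or> p dvd b"
    using assms prime_dvd_mult_iff dvd_trans by blast
qed (auto intro: dvd_trans)

text \<open>An element w of z outside x and y divides lcm a b, so it is the lcm of the divisors
  gcd w a of x and gcd w b of y, both of which lie in z.  Exchanging them between x and y
  is only possible through the extra prime p, which forces w = p.\<close>

lemma divisor_sets_subset_Int_if_subset_join:
  assumes "prime p"
    and P: "x \<in> divisor_sets p n" "y \<in> divisor_sets p n" "z \<in> divisor_sets p n"
    and "is_join (divisor_sets p n) x y j" "z \<subseteq> j"
    and xz: "x \<inter> z \<subseteq> y" and yz: "y \<inter> z \<subseteq> x"
  shows "z \<subseteq> x \<inter> y"
proof
  fix w assume "w \<in> z"
  obtain a S where x: "x = {d. d dvd a} \<union> S" "a dvd n" "S \<subseteq> {p}"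
    using P(1) by (rule divisor_setsE)
  obtain b T where y: "y = {d. d dvd b} \<union> T" "b dvd n" "T \<subseteq> {p}"
    using P(2) by (rule divisor_setsE)
  obtain c R where z: "z = {d. d dvd c} \<union> R" "R \<subseteq> {p}"
    using P(3) by (rule divisor_setsE)
  show "w \<in> x \<inter> y"
  proof (rule ccontr)
    assume "w \<notin> x \<inter> y"
    then have w: "w \<notin> x" "w \<notin> y"
      using \<open>w \<in> z\<close> xz yz by blast+
    have "{d. d dvd lcm a b} \<union> S \<union> T \<in> divisor_sets p n"
      using divisor_setsI[of "lcm a b" n "S \<union> T" p] x y by (simp add: lcm_least Un_assoc)
    moreover have "x \<subseteq> {d. d dvd lcm a b} \<union> S \<union> T" "y \<subseteq> {d. d dvd lcm a b} \<union> S \<union> T"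
      using x y by (auto intro: dvd_trans)
    ultimately have "j \<subseteq> {d. d dvd lcm a b} \<union> S \<union> T"
      using \<open>is_join _ x y j\<close> unfolding is_join_def by blast
    then have "w dvd lcm a b"
      using \<open>w \<in> z\<close> \<open>z \<subseteq> j\<close> w x y by blast
    have "w dvd c"
    proof (rule ccontr)
      assume "\<not> w dvd c"
      then have "w = p"
        using \<open>w \<in> z\<close> z by auto
      then show False
        using \<open>w dvd lcm a b\<close> prime_dvd_lcm_nat_iff[OF \<open>prime p\<close>] w x y by auto
    qed
    have w_lcm: "w = lcm (gcd w a) (gcd w b)"
      using \<open>w dvd lcm a b\<close> by (metis gcd_lcm_distrib gcd_nat.absorb1)
    have "gcd w a \<in> y" "gcd w b \<in> x"
      using \<open>w dvd c\<close> x y z xz yz by (auto intro: dvd_trans)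
    have "\<not> gcd w a dvd b"
    proof
      assume "gcd w a dvd b"
      then have "w dvd b"
        using w_lcm by (metis gcd_dvd2 lcm_least)
      then show False
        using w y by simp
    qed
    moreover have "\<not> gcd w b dvd a"
    proof
      assume "gcd w b dvd a"
      then have "w dvd a"
        using w_lcm by (metis gcd_dvd2 lcm_least)
      then show False
        using w x by simp
    qed
    ultimately have "gcd w a = p" "gcd w b = p"
      using \<open>gcd w a \<in> y\<close> \<open>gcd w b \<in> x\<close> x y by auto
    then have "w = gcd w a"
      using w_lcm by simp
    then have "w dvd a"
      by (metis gcd_dvd2)
    then show False
      using w x by simp
  qed
qed

lemma no_M3_sublattice_divisor_sets:
  "prime p \<Longrightarrow> \<not> has_M3_sublattice (divisor_sets p n)"
  by (rule no_M3_sublattice_if_Int_closed)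
    (use Int_divisor_sets divisor_sets_subset_Int_if_subset_join in blast)+

lemma (in group) subgroup_nat_pow_closed:
  "subgroup H G \<Longrightarrow> h \<in> H \<Longrightarrow> h [^] (k::nat) \<in> H"
  by (metis int_pow_int subgroup_int_pow_closed)

lemma (in group) subgroup_pow_gcd_closed:
  fixes a b :: nat
  assumes H: "subgroup H G" and x: "x \<in> carrier G"
    and "x [^] a \<in> H" "x [^] b \<in> H"
  shows "x [^] gcd a b \<in> H"
proof (cases "a = 0")
  case True
  then show ?thesis using assms(4) by simp
next
  case False
  then obtain u v where "a * u = b * v + gcd a b"
    using bezout_nat by blast
  then have "(x [^] a) [^] u = (x [^] b) [^] v \<otimes> x [^] gcd a b"
    using x by (simp add: nat_pow_pow nat_pow_mult)
  then have "x [^] gcd a b = inv ((x [^] b) [^] v) \<otimes> (x [^] a) [^] u"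
    using x by (simp add: inv_solve_left)
  then show ?thesis
    using assms by (simp add: subgroup_nat_pow_closed subgroup.m_closed subgroup.m_inv_closed)
qed

lemma (in group) subgroup_pow_exponents:
  assumes H: "subgroup H G" and x: "x \<in> carrier G" and "0 < ord x"
  obtains c where "\<And>k::nat. x [^] k \<in> H \<longleftrightarrow> c dvd k"
proof
  define c where "c = (LEAST m::nat. 0 < m \<and> x [^] m \<in> H)"
  have "0 < ord x \<and> x [^] ord x \<in> H"
    using assms by (simp add: subgroup.one_closed)
  then have "0 < c \<and> x [^] c \<in> H"
    unfolding c_def by (rule LeastI)
  then have c: "0 < c" "x [^] c \<in> H"
    by blast+
  fix k :: nat
  show "x [^] k \<in> H \<longleftrightarrow> c dvd k"
  proof
    assume "x [^] k \<in> H"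
    then have "x [^] gcd k c \<in> H"
      using subgroup_pow_gcd_closed[OF H x] c by blast
    moreover have "0 < gcd k c" "gcd k c \<le> c"
      using c by (simp_all add: gcd_le2_nat)
    ultimately have "c \<le> gcd k c"
      unfolding c_def by (simp add: Least_le)
    then have "gcd k c = c"
      using \<open>gcd k c \<le> c\<close> by simp
    then show "c dvd k"
      by (metis gcd_dvd1)
  next
    assume "c dvd k"
    then obtain t where "k = c * t" ..
    then show "x [^] k \<in> H"
      using c x H by (simp flip: nat_pow_pow add: subgroup_nat_pow_closed)
  qed
qed

lemma (in group) ord_pow_range:
  assumes x: "x \<in> carrier G" and "0 < ord x"
  shows "range (\<lambda>k::nat. ord (x [^] k)) = {d. d dvd ord x}"
proof (intro equalityI subsetI)
  fix d assume "d \<in> range (\<lambda>k::nat. ord (x [^] k))"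
  then obtain k :: nat where "d = ord (x [^] k)" by blast
  moreover have "(x [^] k) [^] ord x = \<one>"
    using x by (metis nat_pow_one nat_pow_pow mult.commute pow_ord_eq_1)
  ultimately show "d \<in> {d. d dvd ord x}"
    using x by (simp add: pow_eq_id)
next
  fix d assume "d \<in> {d. d dvd ord x}"
  then have "d dvd ord x" "0 < d"
    using \<open>0 < ord x\<close> by auto
  then have "ord (x [^] (ord x div d)) = d"
    using x \<open>0 < ord x\<close> by (auto simp: ord_pow)
  then show "d \<in> range (\<lambda>k::nat. ord (x [^] k))"
    by (metis rangeI)
qed

lemma (in group) ord_subgroup_Int_powers:
  assumes H: "subgroup H G" and x: "x \<in> carrier G" and "0 < ord x"
    and exponents: "\<And>k::nat. x [^] k \<in> H \<longleftrightarrow> c dvd k"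
  shows "ord ` (H \<inter> range (\<lambda>k::nat. x [^] k)) = {d. d dvd ord x div c}"
proof -
  have "c dvd ord x"
    using exponents[of "ord x"] x H by (simp add: subgroup.one_closed)
  then have "0 < c" "ord (x [^] c) = ord x div c"
    using \<open>0 < ord x\<close> x by (auto simp: ord_pow)
  have "H \<inter> range (\<lambda>k::nat. x [^] k) = range (\<lambda>t::nat. (x [^] c) [^] t)"
    using exponents x by (auto simp: nat_pow_pow elim!: dvdE)
  then have "ord ` (H \<inter> range (\<lambda>k::nat. x [^] k)) = range (\<lambda>t::nat. ord ((x [^] c) [^] t))"
    by (simp add: image_image)
  also have "\<dots> = {d. d dvd ord x div c}"
    using ord_pow_range[of "x [^] c"] x \<open>ord (x [^] c) = ord x div c\<close> \<open>0 < c\<close> \<open>c dvd ord x\<close> \<open>0 < ord x\<close>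
    by (simp add: div_greater_zero_iff dvd_imp_le)
  finally show ?thesis .
qed

lemma carrier_dihedral: "carrier (dihedral n) = {0..<n} \<times> UNIV"
  by (simp add: dihedral_def)

lemma one_dihedral [simp]: "\<one>\<^bsub>dihedral n\<^esub> = (0, False)"
  by (simp add: dihedral_def)

lemma mult_dihedral [simp]:
  "(a, u) \<otimes>\<^bsub>dihedral n\<^esub> (b, v) = (if u then (a + n - b) mod n else (a + b) mod n, u \<noteq> v)"
  by (simp add: dihedral_def)

lemma int_dihedral_rotation_part:
  "b \<le> n \<Longrightarrow> int (if u then (a + n - b) mod n else (a + b) mod n)
     = (int a + (if u then - int b else int b)) mod int n"
  by (auto simp: of_nat_mod of_nat_diff simp flip: diff_add_eq)

lemma dihedral_assoc:
  assumes "0 < n" "b \<le> n" "c \<le> n"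
  shows "((a, u) \<otimes>\<^bsub>dihedral n\<^esub> (b, v)) \<otimes>\<^bsub>dihedral n\<^esub> (c, w)
       = (a, u) \<otimes>\<^bsub>dihedral n\<^esub> ((b, v) \<otimes>\<^bsub>dihedral n\<^esub> (c, w))"
proof -
  have "int (fst (((a, u) \<otimes>\<^bsub>dihedral n\<^esub> (b, v)) \<otimes>\<^bsub>dihedral n\<^esub> (c, w)))
      = int (fst ((a, u) \<otimes>\<^bsub>dihedral n\<^esub> ((b, v) \<otimes>\<^bsub>dihedral n\<^esub> (c, w))))"
    using assms by (simp add: int_dihedral_rotation_part order_less_imp_le del: of_nat_mod)
      (auto simp: mod_simps algebra_simps)
  then show ?thesis
    by (auto simp: prod_eq_iff)
qed

lemma group_dihedral:
  assumes "0 < n"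
  shows "group (dihedral n)"
proof (rule groupI)
  fix x y z
  assume "x \<in> carrier (dihedral n)" "y \<in> carrier (dihedral n)" "z \<in> carrier (dihedral n)"
  then show "x \<otimes>\<^bsub>dihedral n\<^esub> y \<otimes>\<^bsub>dihedral n\<^esub> z
      = x \<otimes>\<^bsub>dihedral n\<^esub> (y \<otimes>\<^bsub>dihedral n\<^esub> z)"
    using assms
    by (cases x; cases y; cases z) (simp add: carrier_dihedral dihedral_assoc del: mult_dihedral)
next
  fix x assume "x \<in> carrier (dihedral n)"
  then obtain a u where x: "x = (a, u)" "a < n"
    by (auto simp: carrier_dihedral)
  then have "(if u then a else (n - a) mod n, u) \<otimes>\<^bsub>dihedral n\<^esub> x = \<one>\<^bsub>dihedral n\<^esub>"
    using assms by (auto simp: mod_add_left_eq)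
  moreover have "(if u then a else (n - a) mod n, u) \<in> carrier (dihedral n)"
    using x assms by (simp add: carrier_dihedral)
  ultimately show "\<exists>y\<in>carrier (dihedral n). y \<otimes>\<^bsub>dihedral n\<^esub> x = \<one>\<^bsub>dihedral n\<^esub>"
    by blast
qed (use assms in \<open>auto simp: carrier_dihedral\<close>)

definition dihedral_rotation :: "nat \<Rightarrow> nat \<times> bool" where
  "dihedral_rotation n = (1 mod n, False)"

definition dihedral_subgroup :: "nat \<Rightarrow> nat \<Rightarrow> bool \<Rightarrow> (nat \<times> bool) set" where
  "dihedral_subgroup n c s = {(k, b). k < n \<and> c dvd k \<and> (b \<longrightarrow> s)}"

context
  fixes n :: nat
  assumes n: "0 < n"
begin

interpretation D: group "dihedral n"
  using n by (rule group_dihedral)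

lemma dihedral_rotation_pow:
  "dihedral_rotation n [^]\<^bsub>dihedral n\<^esub> (k::nat) = (k mod n, False)"
  by (induction k) (simp_all add: dihedral_rotation_def mod_Suc_eq)

lemma dihedral_rotation_carrier: "dihedral_rotation n \<in> carrier (dihedral n)"
  using n by (simp add: dihedral_rotation_def carrier_dihedral)

lemma range_dihedral_rotation_pow:
  "range (\<lambda>k::nat. dihedral_rotation n [^]\<^bsub>dihedral n\<^esub> k) = {0..<n} \<times> {False}"
proof (intro equalityI subsetI)
  fix x assume "x \<in> {0..<n} \<times> {False}"
  then obtain k where "k < n" "x = (k, False)"
    by auto
  then have "x = dihedral_rotation n [^]\<^bsub>dihedral n\<^esub> k"
    by (simp add: dihedral_rotation_pow)
  then show "x \<in> range (\<lambda>k::nat. dihedral_rotation n [^]\<^bsub>dihedral n\<^esub> k)"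
    by (rule image_eqI) simp
qed (use n in \<open>auto simp: dihedral_rotation_pow\<close>)

lemma ord_dihedral_rotation: "D.ord (dihedral_rotation n) = n"
  using dihedral_rotation_carrier
  by (simp add: D.ord_unique dihedral_rotation_pow dvd_eq_mod_eq_0)

lemma dihedral_reflection_pow:
  "k < n \<Longrightarrow> (k, True) [^]\<^bsub>dihedral n\<^esub> (m::nat) = (if even m then (0, False) else (k, True))"
  by (induction m) auto

lemma ord_dihedral_reflection: "k < n \<Longrightarrow> D.ord (k, True) = 2"
  by (simp add: D.ord_unique carrier_dihedral dihedral_reflection_pow)

lemma inv_dihedral:
  "k < n \<Longrightarrow> inv\<^bsub>dihedral n\<^esub> (k, b) = (if b then k else (n - k) mod n, b)"
  by (rule D.inv_equality) (use n in \<open>auto simp: carrier_dihedral mod_add_left_eq\<close>)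

lemma subgroup_dihedral_subgroup:
  assumes "c dvd n"
  shows "subgroup (dihedral_subgroup n c s) (dihedral n)"
proof (rule D.subgroupI)
  show "dihedral_subgroup n c s \<subseteq> carrier (dihedral n)" "dihedral_subgroup n c s \<noteq> {}"
    using n by (auto simp: dihedral_subgroup_def carrier_dihedral)
next
  fix x assume "x \<in> dihedral_subgroup n c s"
  then show "inv\<^bsub>dihedral n\<^esub> x \<in> dihedral_subgroup n c s"
    using assms by (auto simp: dihedral_subgroup_def inv_dihedral dvd_mod_iff dvd_diff_nat)
next
  fix x y assume "x \<in> dihedral_subgroup n c s" "y \<in> dihedral_subgroup n c s"
  then show "x \<otimes>\<^bsub>dihedral n\<^esub> y \<in> dihedral_subgroup n c s"
    using assms n by (auto simp: dihedral_subgroup_def dvd_mod_iff dvd_diff_nat)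
qed

lemma pi_e_dihedral:
  assumes H: "subgroup H (dihedral n)"
    and exponents: "\<And>k::nat. dihedral_rotation n [^]\<^bsub>dihedral n\<^esub> k \<in> H \<longleftrightarrow> c dvd k"
  shows "pi_e (dihedral n) H = {d. d dvd n div c} \<union> (if \<exists>k. (k, True) \<in> H then {2} else {})"
proof -
  have carrier: "H \<subseteq> {0..<n} \<times> UNIV"
    using subgroup.subset[OF H] by (simp add: carrier_dihedral)
  have "H = (H \<inter> range (\<lambda>k::nat. dihedral_rotation n [^]\<^bsub>dihedral n\<^esub> k)) \<union> {(k, b) \<in> H. b}"
    using carrier by (auto simp: range_dihedral_rotation_pow)
  then have "pi_e (dihedral n) H
      = D.ord ` (H \<inter> range (\<lambda>k::nat. dihedral_rotation n [^]\<^bsub>dihedral n\<^esub> k))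
        \<union> D.ord ` {(k, b) \<in> H. b}"
    unfolding pi_e_def by (metis image_Un)
  also have "D.ord ` (H \<inter> range (\<lambda>k::nat. dihedral_rotation n [^]\<^bsub>dihedral n\<^esub> k))
      = {d. d dvd n div c}"
    using D.ord_subgroup_Int_powers[OF H dihedral_rotation_carrier] n exponents
    by (simp add: ord_dihedral_rotation)
  also have "D.ord ` {(k, b) \<in> H. b} = (if \<exists>k. (k, True) \<in> H then {2} else {})"
    using carrier by (force simp: ord_dihedral_reflection)
  finally show ?thesis .
qed

lemma dihedral_rotation_pow_in_dihedral_subgroup:
  "c dvd n \<Longrightarrow> dihedral_rotation n [^]\<^bsub>dihedral n\<^esub> (k::nat) \<in> dihedral_subgroup n c s \<longleftrightarrow> c dvd k"
  using n by (simp add: dihedral_rotation_pow dihedral_subgroup_def dvd_mod_iff)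

lemma pi_poset_dihedral: "pi_poset (dihedral n) = divisor_sets 2 n"
proof (intro equalityI subsetI)
  fix X assume "X \<in> pi_poset (dihedral n)"
  then obtain H where H: "subgroup H (dihedral n)" "X = pi_e (dihedral n) H"
    unfolding pi_poset_def by blast
  obtain c where c: "\<And>k::nat. dihedral_rotation n [^]\<^bsub>dihedral n\<^esub> k \<in> H \<longleftrightarrow> c dvd k"
    using D.subgroup_pow_exponents[OF H(1) dihedral_rotation_carrier] n
    by (auto simp: ord_dihedral_rotation)
  have "c dvd n"
    using c[of n] subgroup.one_closed[OF H(1)] by (simp add: dihedral_rotation_pow)
  then have "n div c dvd n"
    by (metis dvd_div_mult_self dvd_triv_left)
  then show "X \<in> divisor_sets 2 n"
    unfolding H(2) pi_e_dihedral[OF H(1) c] by (intro divisor_setsI) auto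
next
  fix X assume "X \<in> divisor_sets 2 n"
  then obtain m S where X: "X = {d. d dvd m} \<union> S" "m dvd n" "S \<subseteq> {2}"
    by (rule divisor_setsE)
  define H where "H = dihedral_subgroup n (n div m) (2 \<in> S)"
  have "n div m dvd n" "n div (n div m) = m"
    using X(2) n by (auto elim!: dvdE)
  have H_subgroup: "subgroup H (dihedral n)"
    unfolding H_def using \<open>n div m dvd n\<close> by (rule subgroup_dihedral_subgroup)
  have "(\<exists>k. (k, True) \<in> H) \<longleftrightarrow> 2 \<in> S"
    using n by (auto simp: H_def dihedral_subgroup_def)
  then have "pi_e (dihedral n) H = X"
    using pi_e_dihedral[OF H_subgroup] dihedral_rotation_pow_in_dihedral_subgroup
      \<open>n div m dvd n\<close> \<open>n div (n div m) = m\<close> X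
    unfolding H_def by auto
  then show "X \<in> pi_poset (dihedral n)"
    using H_subgroup unfolding pi_poset_def by blast
qed

end

theorem theorem2p8:
  fixes n :: nat
  assumes "0 < n"
  shows "\<not> has_M3_sublattice (pi_poset (dihedral n))"
  using pi_poset_dihedral[OF assms] no_M3_sublattice_divisor_sets[OF two_is_prime_nat] by simp

end
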